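(* For any encoding-decoding functions $(f^{(n)},g^{(n)})$ such that \begin{align} \frac{1}{n}\log L&\leq R^{\mathrm{c}},~ \frac{1}{n}\log M\geq R^{\mathrm{i}}, \end{align} given any deterministic function $h^{(n)}$ and any distortion level $D$, we have \begin{align} \mathrm{P}_\mathrm{c}^{(n)}(f^{(n)},g^{(n)},h^{(n)},D) &\leq P_{W\mathbf{T}}\Bigg\{\bigcap_{i=1}^7\mathcal{A}_i(W)\Bigg\}+6e^{-n\eta}. \end{align}
   Context: Setting (content identification with lossy recovery): finite alphabets $\mathcal{X},\mathcal{Y},\mathcal{Z},\hat{\mathcal{X}}$, distortion $d$ with $d(x^n,\hat{x}^n)=\frac1n\sum_i d(x_i,\hat{x}_i)$. $M$ feature vectors $X^n(m)$ i.i.d. $P_X^n$; $Y^n(m)$ is the output of DMC $P_{Y|X}$ with input $X^n(m)$; $S(m)=f^{(n)}(Y^n(m))\in\{1,\ldots,L\}$ with deterministic $f^{(n)}$; $W$ uniform on $\{1,\ldots,M\}$ independent of all; $Z^n$ is the output of DMC $P_{Z|X}$ with input $X^n(W)$; $\hat{W}=g^{(n)}(S(1),\ldots,S(M),Z^n)$, with decoding regions $\mathcal{D}(s^M,w)=\{z^n:g^{(n)}(s^M,z^n)=w\}$; $\hat{X}^n=h^{(n)}(S(\hat{W}),Z^n)$. $\mathrm{P}_\mathrm{c}^{(n)}(f^{(n)},g^{(n)},h^{(n)},D)=\Pr\{\hat{W}=W,~d(X^n(W),\hat{X}^n)\leq D\}$. Let $\mathbf{t}=(x^n(1),\ldots,x^n(M),y^n(1),\ldots,y^n(M),s(1),\ldots,s(M),z^n,\hat{x}^n)$,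 and let $P_{W\mathbf{T}}$ be the joint distribution of $(W,\mathbf{T})$ with $\mathbf{T}=(X^n(1..M),Y^n(1..M),S(1..M),Z^n,\hat{X}^n)$, where (as a bound device) $\hat{X}^n$ is generated as $h^{(n)}(S(W),Z^n)$, i.e. $P_{W\mathbf{T}}(w,\mathbf{t})=\frac{1}{M}\prod_{m=1}^M P_X^n(x^n(m))P_{Y|X}^n(y^n(m)|x^n(m))1\{s(m)=f^{(n)}(y^n(m))\}\cdot P_{Z|X}^n(z^n|x^n(w))1\{\hat{x}^n=h^{(n)}(s(w),z^n)\}$. For every $w$ the joint law of $(X^n(w),Y^n(w),S(w),Z^n,\hat{X}^n)$ under $P_{W\mathbf{T}}$ given $W=w$ is the same distribution $P_{X^nY^nSZ^n\hat{X}^n}$; all $P$'s below ($P_{Y^n},P_{Z^n|Y^n},P_{X^n|Y^nZ^n},P_{X^nY^n|SZ^n},P_{Y^nZ^n},P_{Z^n|S}$) are induced by it. Let $Q_{Y^n},Q_{Z^n|SY^n},Q_{X^n|SY^nZ^n},Q_{X^nY^n|SZ^n\hat{X}^n},Q_{Y^nZ^n|S},Q_{Z^n}$ be arbitrary distributions and $\eta>0$. For $w\in\{1,\ldots,M\}$ define the sets of $\mathbf{t}$: $\mathcal{A}_1(w):\ \frac{1}{n}\log\frac{P_{Y^n}(y^n(w))}{Q_{Y^n}(y^n(w))}\geq -\eta$; $\mathcal{A}_2(w):\ \frac{1}{n}\log\frac{P_{Z^n|Y^n}(z^n|y^n(w))}{Q_{Z^n|SY^n}(z^n|s(w),y^n(w))}\geq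 -\eta$; $\mathcal{A}_3(w):\ \frac{1}{n}\log\frac{P_{X^n|Y^nZ^n}(x^n(w)|y^n(w),z^n)}{Q_{X^n|SY^nZ^n}(x^n(w)|s(w),y^n(w),z^n)}\geq -\eta$; $\mathcal{A}_4(w):\ \frac{1}{n}\log\frac{P_{X^nY^n|SZ^n}(x^n(w),y^n(w)|s(w),z^n)}{Q_{X^nY^n|SZ^n\hat{X}^n}(x^n(w),y^n(w)|s(w),z^n,\hat{x}^n)}\geq -\eta$; $\mathcal{A}_5(w):\ R^{\mathrm{c}}\geq \frac{1}{n}\log \frac{Q_{Y^nZ^n|S}(y^n(w),z^n|s(w))}{P_{Y^nZ^n}(y^n(w),z^n)}-\eta$; $\mathcal{A}_6(w):\ R^{\mathrm{i}}\leq \frac{1}{n}\log\frac{P_{Z^n|S}(z^n|s(w))}{Q_{Z^n}(z^n)}+\eta$; $\mathcal{A}_7(w):\ d(x^n(w),\hat{x}^n)\leq D$. *)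

theory Defs
  imports "HOL-Probability.Probability_Mass_Function" "HOL-Library.Extended_Real"
begin

definition seqs :: "nat \<Rightarrow> 'a list set" where
  "seqs n = {xs. length xs = n}"

definition pn :: "'a pmf \<Rightarrow> 'a list \<Rightarrow> real" where
  "pn P xs = (\<Prod>i<length xs. pmf P (xs ! i))"

definition chn :: "('a \<Rightarrow> 'b pmf) \<Rightarrow> 'a list \<Rightarrow> 'b list \<Rightarrow> real" where
  "chn W xs ys = (\<Prod>i<length xs. pmf (W (xs ! i)) (ys ! i))"

definition dist_n :: "('a \<Rightarrow> 'b \<Rightarrow> real) \<Rightarrow> 'a list \<Rightarrow> 'b list \<Rightarrow> real" where
  "dist_n d xs ys = (\<Sum>i<length xs. d (xs ! i) (ys ! i)) / real (length xs)"

definition llr :: "real \<Rightarrow> real \<Rightarrow> ereal" where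
  "llr a b = (if a = 0 then -\<infinity> else if b = 0 then \<infinity> else ereal (ln (a / b)))"

text \<open>Probability of correct identification and reconstruction
  Pr{ What = W, d(X^n(W), Xh^n) <= D }.\<close>
definition Pc ::
  "nat \<Rightarrow> nat \<Rightarrow> 'x pmf \<Rightarrow> ('x \<Rightarrow> 'y pmf) \<Rightarrow> ('x \<Rightarrow> 'z pmf)
   \<Rightarrow> ('y list \<Rightarrow> nat) \<Rightarrow> ((nat \<Rightarrow> nat) \<Rightarrow> 'z list \<Rightarrow> nat) \<Rightarrow> (nat \<Rightarrow> 'z list \<Rightarrow> 'xh list)
   \<Rightarrow> ('x \<Rightarrow> 'xh \<Rightarrow> real) \<Rightarrow> real \<Rightarrow> real" where
  "Pc n M PX PYX PZX f g h d D =
     (\<Sum>w\<in>{1..M}. \<Sum>xs\<in>PiE {1..M} (\<lambda>_. seqs n). \<Sum>ys\<in>PiE {1..M} (\<lambda>_. seqs n). \<Sum>z\<in>seqs n.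
        let ss = restrict (\<lambda>m. f (ys m)) {1..M} in
        (1 / real M) * (\<Prod>m\<in>{1..M}. pn PX (xs m) * chn PYX (xs m) (ys m))
        * chn PZX (xs w) z
        * (if g ss z = w \<and> dist_n d (xs w) (h (ss w) z) \<le> D then 1 else 0))"

text \<open>Joint law P_{X^n Y^n S Z^n Xh^n} of the quantities attached to a single index.\<close>
definition joint1 ::
  "'x pmf \<Rightarrow> ('x \<Rightarrow> 'y pmf) \<Rightarrow> ('x \<Rightarrow> 'z pmf) \<Rightarrow> ('y list \<Rightarrow> nat) \<Rightarrow> (nat \<Rightarrow> 'z list \<Rightarrow> 'xh list)
   \<Rightarrow> 'x list \<times> 'y list \<times> nat \<times> 'z list \<times> 'xh list \<Rightarrow> real" where
  "joint1 PX PYX PZX f h = (\<lambda>(x, y, s, z, xh).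
     pn PX x * chn PYX x y * (if s = f y then 1 else 0) * chn PZX x z * (if xh = h s z then 1 else 0))"

definition T1 :: "nat \<Rightarrow> nat \<Rightarrow> ('x list \<times> 'y list \<times> nat \<times> 'z list \<times> 'xh list) set" where
  "T1 n L = seqs n \<times> seqs n \<times> {1..L} \<times> seqs n \<times> seqs n"

definition Pm ::
  "('x list \<times> 'y list \<times> nat \<times> 'z list \<times> 'xh list \<Rightarrow> real) \<Rightarrow> nat \<Rightarrow> nat
   \<Rightarrow> ('x list \<times> 'y list \<times> nat \<times> 'z list \<times> 'xh list \<Rightarrow> bool) \<Rightarrow> real" where
  "Pm J n L E = (\<Sum>t\<in>{t\<in>T1 n L. E t}. J t)"

definition PY where "PY J n L y = Pm J n L (\<lambda>(x', y', s', z', xh'). y' = y)"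
definition PYZ where "PYZ J n L y z = Pm J n L (\<lambda>(x', y', s', z', xh'). y' = y \<and> z' = z)"
definition PS where "PS J n L s = Pm J n L (\<lambda>(x', y', s', z', xh'). s' = s)"
definition PSZ where "PSZ J n L s z = Pm J n L (\<lambda>(x', y', s', z', xh'). s' = s \<and> z' = z)"
definition PZgY where "PZgY J n L z y = PYZ J n L y z / PY J n L y"
definition PXgYZ where
  "PXgYZ J n L x y z = Pm J n L (\<lambda>(x', y', s', z', xh'). x' = x \<and> y' = y \<and> z' = z) / PYZ J n L y z"
definition PXYgSZ where
  "PXYgSZ J n L x y s z =
     Pm J n L (\<lambda>(x', y', s', z', xh'). x' = x \<and> y' = y \<and> s' = s \<and> z' = z) / PSZ J n L s z"
definition PZgS where "PZgS J n L z s = PSZ J n L s z / PS J n L s"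

type_synonym ('x, 'y, 'z, 'xh) tup =
  "(nat \<Rightarrow> 'x list) \<times> (nat \<Rightarrow> 'y list) \<times> (nat \<Rightarrow> nat) \<times> 'z list \<times> 'xh list"

definition PWT ::
  "nat \<Rightarrow> 'x pmf \<Rightarrow> ('x \<Rightarrow> 'y pmf) \<Rightarrow> ('x \<Rightarrow> 'z pmf) \<Rightarrow> ('y list \<Rightarrow> nat) \<Rightarrow> (nat \<Rightarrow> 'z list \<Rightarrow> 'xh list)
   \<Rightarrow> nat \<times> ('x, 'y, 'z, 'xh) tup \<Rightarrow> real" where
  "PWT M PX PYX PZX f h = (\<lambda>(w, xs, ys, ss, z, xh).
     (1 / real M) * (\<Prod>m\<in>{1..M}. pn PX (xs m) * chn PYX (xs m) (ys m) * (if ss m = f (ys m) then 1 else 0))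
     * chn PZX (xs w) z * (if xh = h (ss w) z then 1 else 0))"

definition TW :: "nat \<Rightarrow> nat \<Rightarrow> nat \<Rightarrow> (nat \<times> ('x, 'y, 'z, 'xh) tup) set" where
  "TW n M L = {1..M} \<times> (PiE {1..M} (\<lambda>_. seqs n) \<times> PiE {1..M} (\<lambda>_. seqs n)
               \<times> PiE {1..M} (\<lambda>_. {1..L}) \<times> seqs n \<times> seqs n)"

definition PrWT ::
  "nat \<Rightarrow> nat \<Rightarrow> nat \<Rightarrow> 'x pmf \<Rightarrow> ('x \<Rightarrow> 'y pmf) \<Rightarrow> ('x \<Rightarrow> 'z pmf) \<Rightarrow> ('y list \<Rightarrow> nat)
   \<Rightarrow> (nat \<Rightarrow> 'z list \<Rightarrow> 'xh list) \<Rightarrow> (nat \<times> ('x, 'y, 'z, 'xh) tup) set \<Rightarrow> real" where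
  "PrWT n M L PX PYX PZX f h E = (\<Sum>p\<in>TW n M L \<inter> E. PWT M PX PYX PZX f h p)"

definition A1 where
  "A1 J n L QY \<eta> w = {(xs, ys, ss, z, xh). 
     ereal (1 / real n) * llr (PY J n L (ys w)) (pmf QY (ys w)) \<ge> ereal (- \<eta>)}"
definition A2 where
  "A2 J n L QZSY \<eta> w = {(xs, ys, ss, z, xh). 
     ereal (1 / real n) * llr (PZgY J n L z (ys w)) (pmf (QZSY (ss w) (ys w)) z) \<ge> ereal (- \<eta>)}"
definition A3 where
  "A3 J n L QXSYZ \<eta> w = {(xs, ys, ss, z, xh). 
     ereal (1 / real n) * llr (PXgYZ J n L (xs w) (ys w) z) (pmf (QXSYZ (ss w) (ys w) z) (xs w))
       \<ge> ereal (- \<eta>)}"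
definition A4 where
  "A4 J n L QXYSZX \<eta> w = {(xs, ys, ss, z, xh). 
     ereal (1 / real n) * llr (PXYgSZ J n L (xs w) (ys w) (ss w) z) (pmf (QXYSZX (ss w) z xh) (xs w, ys w))
       \<ge> ereal (- \<eta>)}"
definition A5 where
  "A5 J n L QYZS Rc \<eta> w = {(xs, ys, ss, z, xh). 
     ereal Rc \<ge> ereal (1 / real n) * llr (pmf (QYZS (ss w)) (ys w, z)) (PYZ J n L (ys w) z) - ereal \<eta>}"
definition A6 where
  "A6 J n L QZ Ri \<eta> w = {(xs, ys, ss, z, xh). 
     ereal Ri \<le> ereal (1 / real n) * llr (PZgS J n L z (ss w)) (pmf QZ z) + ereal \<eta>}"
definition A7 where
  "A7 d D w = {(xs, ys, ss, z, xh).  dist_n d (xs w) xh \<le> D}"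

end

theory Submission
  imports Defs
begin

text \<open>
  Correct identification means that Z^n lies in the decoding region of W, so P_c is the
  P_WT-probability of {g(S^M, Z^n) = W, d(X^n(W), Xh^n) <= D}, the reconstruction being computed
  from the true index. By the union bound it suffices to bound the complements of A_1, ..., A_5 and
  the event {g = W} - A_6 by e^(-n eta) each. The events A_1, ..., A_5 only involve the coordinates
  at index W, whose law is the single-index law; on each complement a change of measure bounds the
  P-mass of every point by e^(-n eta) times its Q-mass (times 1/L for A_5, paid for by the L values
  of S), and a pmf has total mass at most one. For A_6 the change of measure from P_{Z|S} to Q_Z
  costs M e^(-n eta); the factor M cancels the uniform prior of W because the decoding regions of
  distinct messages are disjoint, so their Q_Z-masses sum to at most one.
\<close>

lemma finite_seqs [simp]: "finite (seqs n :: 'a::finite list set)"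
  using finite_lists_length_eq[of "UNIV :: 'a set" n] unfolding seqs_def by simp

lemma sum_seqs_Suc:
  "(\<Sum>l\<in>seqs (Suc n). F l) = (\<Sum>a\<in>(UNIV::'a::finite set). \<Sum>l\<in>seqs n. F (a # l))"
proof -
  have seqs_eq: "seqs (Suc n) = (\<lambda>(a, l). a # l) ` (UNIV \<times> seqs n)"
    unfolding seqs_def by (auto simp: image_iff length_Suc_conv)
  have "inj_on (\<lambda>(a, l). a # l) (UNIV \<times> (seqs n :: 'a list set))"
    by (auto simp: inj_on_def)
  then have "(\<Sum>l\<in>seqs (Suc n). F l) = (\<Sum>p\<in>UNIV \<times> seqs n. F ((\<lambda>(a, l). a # l) p))"
    unfolding seqs_eq by (rule sum.reindex[unfolded comp_def])
  then show ?thesis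
    by (simp add: sum.cartesian_product split_beta)
qed

lemma pn_Cons: "pn P (a # l) = pmf P a * pn P l"
  unfolding pn_def by (simp only: length_Cons prod.lessThan_Suc_shift) simp

lemma chn_Cons: "chn W (a # l) (b # k) = pmf (W a) b * chn W l k"
  unfolding chn_def by (simp only: length_Cons prod.lessThan_Suc_shift) simp

lemma pn_nonneg: "pn P x \<ge> 0"
  unfolding pn_def by (simp add: prod_nonneg)

lemma chn_nonneg: "chn W x y \<ge> 0"
  unfolding chn_def by (simp add: prod_nonneg)

lemma sum_pmf_le_1: "finite A \<Longrightarrow> (\<Sum>a\<in>A. pmf P a) \<le> 1"
  by (metis measure_measure_pmf_finite measure_pmf.subprob_measure_le_1)

lemma sum_pmf_UNIV: "(\<Sum>a\<in>(UNIV::'a::finite set). pmf P a) = 1"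
  by (rule sum_pmf_eq_1) auto

lemma sum_pn_seqs: "(\<Sum>x\<in>seqs n. pn (P::'a::finite pmf) x) = 1"
proof (induction n)
  case 0
  then show ?case by (simp add: seqs_def pn_def)
next
  case (Suc n)
  then show ?case
    by (simp add: sum_seqs_Suc pn_Cons sum_pmf_UNIV flip: sum_distrib_left sum_distrib_right)
qed

lemma sum_chn_seqs: "x \<in> seqs n \<Longrightarrow> (\<Sum>y\<in>seqs n. chn (W::'a \<Rightarrow> 'b::finite pmf) x y) = 1"
proof (induction x arbitrary: n)
  case Nil
  then show ?case by (simp add: seqs_def chn_def)
next
  case (Cons a x)
  then obtain k where "n = Suc k" and "x \<in> seqs k" by (auto simp: seqs_def)
  with Cons.IH show ?case
    by (simp add: sum_seqs_Suc chn_Cons sum_distrib_left[symmetric] sum_pmf_UNIV)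
qed

lemma sum_PiE_prod_times_coord:
  fixes F :: "'i \<Rightarrow> 'a \<Rightarrow> real"
  assumes "finite I" "w \<in> I" "\<And>m. m \<in> I \<Longrightarrow> finite (S m)"
  shows "(\<Sum>p\<in>PiE I S. (\<Prod>m\<in>I-{w}. F m (p m)) * G (p w))
       = (\<Sum>a\<in>S w. G a) * (\<Prod>m\<in>I-{w}. \<Sum>a\<in>S m. F m a)"
proof -
  define H where "H m a = (if m = w then G a else F m a)" for m a
  have "(\<Sum>p\<in>PiE I S. (\<Prod>m\<in>I-{w}. F m (p m)) * G (p w)) = (\<Sum>p\<in>PiE I S. \<Prod>m\<in>I. H m (p m))"
    using assms by (intro sum.cong refl) (simp add: prod.remove H_def mult.commute)
  also have "\<dots> = (\<Prod>m\<in>I. \<Sum>a\<in>S m. H m a)"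
    by (rule prod_sum_PiE[symmetric]) (use assms in auto)
  also have "\<dots> = (\<Sum>a\<in>S w. G a) * (\<Prod>m\<in>I-{w}. \<Sum>a\<in>S m. F m a)"
    using assms by (simp add: prod.remove H_def)
  finally show ?thesis .
qed

lemma sum_PiE2_prod_times_coord:
  fixes F :: "'i \<Rightarrow> 'a \<Rightarrow> 'b \<Rightarrow> real" and G :: "'a \<Rightarrow> 'b \<Rightarrow> real"
  assumes "finite I" "w \<in> I" "finite A" "finite B"
  shows "(\<Sum>xs\<in>PiE I (\<lambda>_. A). \<Sum>ys\<in>PiE I (\<lambda>_. B). (\<Prod>m\<in>I. F m (xs m) (ys m)) * G (xs w) (ys w))
    = (\<Sum>x\<in>A. \<Sum>y\<in>B. F w x y * G x y) * (\<Prod>m\<in>I-{w}. \<Sum>x\<in>A. \<Sum>y\<in>B. F m x y)"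
proof -
  have inner: "(\<Sum>ys\<in>PiE I (\<lambda>_. B). (\<Prod>m\<in>I. F m (xs m) (ys m)) * G (xs w) (ys w))
     = (\<Prod>m\<in>I-{w}. \<Sum>y\<in>B. F m (xs m) y) * (\<Sum>y\<in>B. F w (xs w) y * G (xs w) y)" for xs
  proof -
    have "(\<Sum>ys\<in>PiE I (\<lambda>_. B). (\<Prod>m\<in>I. F m (xs m) (ys m)) * G (xs w) (ys w))
      = (\<Sum>ys\<in>PiE I (\<lambda>_. B). (\<Prod>m\<in>I-{w}. F m (xs m) (ys m)) * (F w (xs w) (ys w) * G (xs w) (ys w)))"
      using assms by (intro sum.cong refl) (simp add: prod.remove mult_ac)
    also have "\<dots> = (\<Prod>m\<in>I-{w}. \<Sum>y\<in>B. F m (xs m) y) * (\<Sum>y\<in>B. F w (xs w) y * G (xs w) y)"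
      using assms by (subst sum_PiE_prod_times_coord) (auto simp: mult.commute)
    finally show ?thesis .
  qed
  show ?thesis
    unfolding inner using assms by (subst sum_PiE_prod_times_coord) auto
qed

lemma sum_change_of_measure:
  fixes J :: "'t \<Rightarrow> real" and \<kappa> :: "'t \<Rightarrow> 'k" and e :: "'t \<Rightarrow> 'v" and Q :: "'k \<Rightarrow> 'v pmf"
  assumes T: "finite T" and J: "\<And>t. t \<in> T \<Longrightarrow> J t \<ge> 0"
    and W: "\<And>k. k \<in> \<kappa> ` T \<Longrightarrow> W k \<ge> 0" and c: "c \<ge> 0"
    and mass_le: "\<And>k v. B k v \<Longrightarrow> 0 < (\<Sum>t\<in>{t\<in>T. \<kappa> t = k \<and> e t = v}. J t) \<Longrightarrow>
       (\<Sum>t\<in>{t\<in>T. \<kappa> t = k \<and> e t = v}. J t) \<le> c * W k * pmf (Q k) v"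
  shows "(\<Sum>t\<in>{t\<in>T. B (\<kappa> t) (e t)}. J t) \<le> c * (\<Sum>k\<in>\<kappa> ` T. W k)"
proof -
  define mass where "mass k v = (\<Sum>t\<in>{t\<in>T. \<kappa> t = k \<and> e t = v}. J t)" for k v
  have "(\<Sum>t\<in>{t\<in>T. B (\<kappa> t) (e t)}. J t)
      = (\<Sum>p\<in>\<kappa> ` T \<times> e ` T. \<Sum>t\<in>{t\<in>{t\<in>T. B (\<kappa> t) (e t)}. (\<kappa> t, e t) = p}. J t)"
    by (rule sum.group[symmetric]) (use T in auto)
  also have "\<dots> = (\<Sum>k\<in>\<kappa> ` T. \<Sum>v\<in>e ` T. if B k v then mass k v else 0)"
    unfolding sum.cartesian_product mass_def
    by (intro sum.cong refl) (auto intro!: arg_cong[where f = "sum J"] sum.neutral)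
  also have "\<dots> \<le> (\<Sum>k\<in>\<kappa> ` T. \<Sum>v\<in>e ` T. c * W k * pmf (Q k) v)"
  proof (intro sum_mono)
    fix k v assume "k \<in> \<kappa> ` T"
    moreover have "mass k v \<ge> 0"
      unfolding mass_def by (intro sum_nonneg) (simp add: J)
    ultimately show "(if B k v then mass k v else 0) \<le> c * W k * pmf (Q k) v"
      using mass_le[of k v] W c unfolding mass_def[symmetric] by (force simp: less_le)
  qed
  also have "\<dots> = (\<Sum>k\<in>\<kappa> ` T. c * W k * (\<Sum>v\<in>e ` T. pmf (Q k) v))"
    by (simp add: sum_distrib_left)
  also have "\<dots> \<le> (\<Sum>k\<in>\<kappa> ` T. c * W k)"
    using W c T by (intro sum_mono mult_right_le_one_le sum_nonneg sum_pmf_le_1) auto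
  finally show ?thesis
    by (simp add: sum_distrib_left)
qed

lemma llr_less_imp_le:
  assumes n: "n > 0" and a: "a > 0" and b: "b \<ge> 0"
    and less: "ereal (1 / real n) * llr a b < ereal r"
  shows "a \<le> exp (real n * r) * b"
proof -
  have "b > 0"
    using less a b n by (cases "b = 0") (auto simp: llr_def)
  with less a have "ln (a / b) / real n < r"
    by (simp add: llr_def)
  with n have "ln (a / b) < real n * r"
    by (simp add: divide_less_eq mult.commute)
  with a \<open>b > 0\<close> have "a / b < exp (real n * r)"
    by (metis divide_pos_pos exp_less_cancel_iff exp_ln)
  with \<open>b > 0\<close> show ?thesis
    by (simp add: divide_less_eq less_imp_le)
qed

lemma llr_greater_imp_le:
  assumes n: "n > 0" and a: "a \<ge> 0" and b: "b > 0"
    and greater: "ereal (1 / real n) * llr a b > ereal r"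
  shows "exp (real n * r) * b \<le> a"
proof -
  have "a > 0"
    using greater a b n by (cases "a = 0") (auto simp: llr_def)
  with greater b have "ln (a / b) / real n > r"
    by (simp add: llr_def)
  with n have "ln (a / b) > real n * r"
    by (simp add: less_divide_eq mult.commute)
  with \<open>a > 0\<close> b have "a / b > exp (real n * r)"
    by (metis divide_pos_pos exp_less_cancel_iff exp_ln)
  with b show ?thesis
    by (simp add: less_divide_eq less_imp_le)
qed

lemma le_exp_of_ln_div_le:
  assumes "n > 0" "L > 0" "ln (real L) / real n \<le> R"
  shows "real L \<le> exp (real n * R)"
proof -
  have "ln (real L) \<le> real n * R"
    using assms by (simp add: divide_le_eq mult.commute)
  then show ?thesis
    using assms by (metis exp_le_cancel_iff exp_ln of_nat_0_less_iff)
qed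

lemma exp_le_of_le_ln_div:
  assumes "n > 0" "M > 0" "R \<le> ln (real M) / real n"
  shows "exp (real n * R) \<le> real M"
proof -
  have "real n * R \<le> ln (real M)"
    using assms by (simp add: le_divide_eq mult.commute)
  then show ?thesis
    using assms by (metis exp_le_cancel_iff exp_ln of_nat_0_less_iff)
qed

lemma finite_T1 [simp]:
  "finite (T1 n L :: ('x::finite list \<times> 'y::finite list \<times> nat \<times> 'z::finite list \<times> 'xh::finite list) set)"
  by (simp add: T1_def)

lemma Pm_nonneg: "(\<And>t. J t \<ge> 0) \<Longrightarrow> Pm J n L E \<ge> 0"
  unfolding Pm_def by (simp add: sum_nonneg)

lemma Pm_mono:
  fixes E :: "'x::finite list \<times> 'y::finite list \<times> nat \<times> 'z::finite list \<times> 'xh::finite list \<Rightarrow> bool"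
  shows "(\<And>t. J t \<ge> 0) \<Longrightarrow> (\<And>t. E t \<Longrightarrow> E' t) \<Longrightarrow> Pm J n L E \<le> Pm J n L E'"
  unfolding Pm_def by (rule sum_mono2) auto

lemma Pm_partition:
  fixes e :: "'x::finite list \<times> 'y::finite list \<times> nat \<times> 'z::finite list \<times> 'xh::finite list \<Rightarrow> 'v"
  assumes "finite V" "e ` T1 n L \<subseteq> V"
  shows "Pm J n L E = (\<Sum>v\<in>V. Pm J n L (\<lambda>t. E t \<and> e t = v))"
  unfolding Pm_def using assms by (subst sum.group[symmetric, where g = e and T = V]) auto

lemma PWT_nonneg: "PWT M PX PYX PZX f h p \<ge> 0"
  by (cases p)
    (auto simp: PWT_def pn_nonneg chn_nonneg intro!: divide_nonneg_nonneg mult_nonneg_nonneg prod_nonneg)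

lemma finite_TW: "finite (TW n M L :: (nat \<times> ('x::finite, 'y::finite, 'z::finite, 'xh::finite) tup) set)"
  unfolding TW_def by (intro finite_cartesian_product finite_PiE) auto

lemma PrWT_mono:
  fixes E :: "(nat \<times> ('x::finite, 'y::finite, 'z::finite, 'xh::finite) tup) set"
  shows "E \<subseteq> E' \<Longrightarrow> PrWT n M L PX PYX PZX f h E \<le> PrWT n M L PX PYX PZX f h E'"
  unfolding PrWT_def by (rule sum_mono2) (auto simp: finite_TW PWT_nonneg)

lemma PrWT_Un_le_add:
  fixes E :: "(nat \<times> ('x::finite, 'y::finite, 'z::finite, 'xh::finite) tup) set"
  assumes "PrWT n M L PX PYX PZX f h E \<le> a" "PrWT n M L PX PYX PZX f h E' \<le> b"
  shows "PrWT n M L PX PYX PZX f h (E \<union> E') \<le> a + b"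
proof -
  have "PrWT n M L PX PYX PZX f h (E \<union> E')
      \<le> PrWT n M L PX PYX PZX f h E + PrWT n M L PX PYX PZX f h E'"
    unfolding PrWT_def Int_Un_distrib
    by (subst sum_Un) (auto simp: finite_TW PWT_nonneg sum_nonneg)
  with assms show ?thesis by linarith
qed

lemma prod_times_indicator_PiE:
  fixes a :: "'i \<Rightarrow> real"
  assumes "finite I" "ss \<in> PiE I S"
  shows "(\<Prod>m\<in>I. a m * (if ss m = s0 m then 1 else 0)) = (if ss = restrict s0 I then \<Prod>m\<in>I. a m else 0)"
proof (cases "ss = restrict s0 I")
  case True
  then have "(\<Prod>m\<in>I. a m * (if ss m = s0 m then 1 else 0)) = (\<Prod>m\<in>I. a m)"
    by (intro prod.cong) auto
  with True show ?thesis
    by simp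
next
  case False
  with assms obtain m where "m \<in> I" "ss m \<noteq> s0 m"
    by (metis PiE_restrict restrict_ext)
  with assms False show ?thesis
    by (auto intro: prod_zero)
qed

lemma PrWT_expand:
  fixes E :: "(nat \<times> ('x::finite, 'y::finite, 'z::finite, 'xh::finite) tup) set"
  shows "PrWT n M L PX PYX PZX f h E
    = (\<Sum>w\<in>{1..M}. \<Sum>xs\<in>PiE {1..M} (\<lambda>_. seqs n). \<Sum>ys\<in>PiE {1..M} (\<lambda>_. seqs n).
       \<Sum>ss\<in>PiE {1..M} (\<lambda>_. {1..L}). \<Sum>z\<in>seqs n. \<Sum>xh\<in>seqs n.
         if (w, xs, ys, ss, z, xh) \<in> E then PWT M PX PYX PZX f h (w, xs, ys, ss, z, xh) else 0)"
  unfolding PrWT_def TW_def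
  by (simp add: sum.inter_restrict finite_PiE sum.cartesian_product')

locale identification_code =
  fixes n M L :: nat and PX :: "'x::finite pmf" and PYX :: "'x \<Rightarrow> 'y::finite pmf"
    and PZX :: "'x \<Rightarrow> 'z::finite pmf"
    and f :: "'y list \<Rightarrow> nat" and h :: "nat \<Rightarrow> 'z list \<Rightarrow> 'xh::finite list"
  assumes n_pos: "n > 0" and M_pos: "M \<ge> 1" and L_pos: "L \<ge> 1"
    and f_range: "\<And>ys. length ys = n \<Longrightarrow> f ys \<in> {1..L}"
    and h_len: "\<And>s z. s \<in> {1..L} \<Longrightarrow> length z = n \<Longrightarrow> length (h s z) = n"
begin

abbreviation J where "J \<equiv> joint1 PX PYX PZX f h"

abbreviation PW where "PW \<equiv> PrWT n M L PX PYX PZX f h"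

lemma f_in_range: "y \<in> seqs n \<Longrightarrow> f y \<in> {1..L}"
  using f_range by (simp add: seqs_def)

lemma h_in_seqs: "s \<in> {1..L} \<Longrightarrow> z \<in> seqs n \<Longrightarrow> h s z \<in> seqs n"
  using h_len by (simp add: seqs_def)

definition PXYS :: "'x list \<Rightarrow> 'y list \<Rightarrow> nat \<Rightarrow> real" where
  "PXYS x y s = pn PX x * chn PYX x y * (if s = f y then 1 else 0)"

definition PZXhgXS :: "'x list \<Rightarrow> nat \<Rightarrow> 'z list \<Rightarrow> 'xh list \<Rightarrow> real" where
  "PZXhgXS x s z xh = chn PZX x z * (if xh = h s z then 1 else 0)"

lemma joint1_eq: "J (x, y, s, z, xh) = PXYS x y s * PZXhgXS x s z xh"
  by (simp add: joint1_def PXYS_def PZXhgXS_def)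

lemma PWT_eq:
  "PWT M PX PYX PZX f h (w, xs, ys, ss, z, xh)
     = (\<Prod>m\<in>{1..M}. PXYS (xs m) (ys m) (ss m)) * PZXhgXS (xs w) (ss w) z xh / real M"
  by (simp add: PWT_def PXYS_def PZXhgXS_def)

lemma PXYS_nonneg: "PXYS x y s \<ge> 0"
  by (simp add: PXYS_def pn_nonneg chn_nonneg)

lemma J_nonneg: "J t \<ge> 0"
  by (cases t) (simp add: joint1_eq PXYS_nonneg PZXhgXS_def chn_nonneg)

lemma sum_PZXhgXS:
  "x \<in> seqs n \<Longrightarrow> s \<in> {1..L} \<Longrightarrow> (\<Sum>z\<in>seqs n. \<Sum>xh\<in>seqs n. PZXhgXS x s z xh) = 1"
  by (simp add: PZXhgXS_def h_in_seqs sum_chn_seqs flip: sum_distrib_left)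

lemma sum_PXYS: "(\<Sum>x\<in>seqs n. \<Sum>y\<in>seqs n. \<Sum>s\<in>{1..L}. PXYS x y s) = 1"
proof -
  have "(\<Sum>s\<in>{1..L}. PXYS x y s) = pn PX x * chn PYX x y" if "y \<in> seqs n" for x y
    using f_in_range[OF that] by (simp add: PXYS_def flip: sum_distrib_left)
  then show ?thesis
    by (simp add: sum_chn_seqs sum_pn_seqs flip: sum_distrib_left)
qed

lemma Pm_expand:
  "Pm J n L E = (\<Sum>x\<in>seqs n. \<Sum>y\<in>seqs n. \<Sum>s\<in>{1..L}. \<Sum>z\<in>seqs n. \<Sum>xh\<in>seqs n.
     if E (x, y, s, z, xh) then PXYS x y s * PZXhgXS x s z xh else 0)"
  unfolding Pm_def T1_def by (simp add: sum.inter_filter sum.cartesian_product' joint1_eq cong: if_cong)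

lemma Pm_S_eq_sum:
  assumes "s \<in> {1..L}"
  shows "Pm J n L (\<lambda>(x', y', s', z', xh'). s' = s \<and> E x' y' z' xh')
    = (\<Sum>x\<in>seqs n. \<Sum>y\<in>seqs n. PXYS x y s *
         (\<Sum>z\<in>seqs n. \<Sum>xh\<in>seqs n. if E x y z xh then PZXhgXS x s z xh else 0))"
proof -
  have "(\<Sum>s'\<in>{1..L}. \<Sum>z\<in>seqs n. \<Sum>xh\<in>seqs n.
          if s' = s \<and> E x y z xh then PXYS x y s' * PZXhgXS x s' z xh else 0)
      = (\<Sum>s'\<in>{1..L}. if s' = s then \<Sum>z\<in>seqs n. \<Sum>xh\<in>seqs n.
          if E x y z xh then PXYS x y s' * PZXhgXS x s' z xh else 0 else 0)" for x y
    by (intro sum.cong) auto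
  then show ?thesis
    using assms by (simp add: Pm_expand sum_distrib_left if_distrib cong: if_cong)
qed

lemma PS_eq: "s \<in> {1..L} \<Longrightarrow> PS J n L s = (\<Sum>x\<in>seqs n. \<Sum>y\<in>seqs n. PXYS x y s)"
  using Pm_S_eq_sum[of s "\<lambda>_ _ _ _. True"] by (simp add: PS_def sum_PZXhgXS)

lemma sum_PS: "(\<Sum>s\<in>{1..L}. PS J n L s) = 1"
proof -
  have "(\<Sum>s\<in>{1..L}. PS J n L s) = (\<Sum>s\<in>{1..L}. \<Sum>x\<in>seqs n. \<Sum>y\<in>seqs n. PXYS x y s)"
    by (simp add: PS_eq)
  also have "\<dots> = (\<Sum>x\<in>seqs n. \<Sum>y\<in>seqs n. \<Sum>s\<in>{1..L}. PXYS x y s)"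
    by (simp only: sum.swap[of _ "{1..L}"])
  finally show ?thesis
    by (simp only: sum_PXYS)
qed

lemma Pm_True: "Pm J n L (\<lambda>_. True) = 1"
  using sum_PXYS by (simp add: Pm_expand sum_PZXhgXS flip: sum_distrib_left)

lemma Pm_cong_support:
  assumes "\<And>x y z. x \<in> seqs n \<Longrightarrow> y \<in> seqs n \<Longrightarrow> z \<in> seqs n \<Longrightarrow>
      E (x, y, f y, z, h (f y) z) \<longleftrightarrow> E' (x, y, f y, z, h (f y) z)"
  shows "Pm J n L E = Pm J n L E'"
proof -
  have "(if E t then J t else 0) = (if E' t then J t else 0)" if "t \<in> T1 n L" for t
  proof (cases "J t = 0")
    case False
    then show ?thesis
      using that assms by (cases t) (auto simp: T1_def joint1_def split: if_splits)
  qed simp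
  then show ?thesis
    unfolding Pm_def by (simp add: sum.inter_filter cong: sum.cong)
qed

text \<open>
  Since S = f(Y^n) and Xh^n = h(S, Z^n) almost surely, E only has to agree with the conditional
  event on such tuples; this lets the kernel Q depend on more coordinates than the conditional
  probability it is compared with.
\<close>

lemma Pm_llr_conditional_le:
  fixes \<kappa> :: "'x list \<times> 'y list \<times> nat \<times> 'z list \<times> 'xh list \<Rightarrow> 'k"
    and e :: "'x list \<times> 'y list \<times> nat \<times> 'z list \<times> 'xh list \<Rightarrow> 'v" and Q :: "'k \<Rightarrow> 'v pmf"
  defines "Pcond k v \<equiv> Pm J n L (\<lambda>t. \<kappa> t = k \<and> e t = v) / Pm J n L (\<lambda>t. \<kappa> t = k)"
  assumes E: "\<And>x y z. x \<in> seqs n \<Longrightarrow> y \<in> seqs n \<Longrightarrow> z \<in> seqs n \<Longrightarrow>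
      let t = (x, y, f y, z, h (f y) z) in
      E t \<longleftrightarrow> ereal (1 / real n) * llr (Pcond (\<kappa> t) (e t)) (pmf (Q (\<kappa> t)) (e t)) < ereal (- \<eta>)"
  shows "Pm J n L E \<le> exp (- real n * \<eta>)"
proof -
  have "Pm J n L (\<lambda>t. ereal (1 / real n) * llr (Pcond (\<kappa> t) (e t)) (pmf (Q (\<kappa> t)) (e t)) < ereal (- \<eta>))
      \<le> exp (- real n * \<eta>) * (\<Sum>k\<in>\<kappa> ` T1 n L. Pm J n L (\<lambda>t. \<kappa> t = k))"
    unfolding Pm_def
  proof (rule sum_change_of_measure[where Q = Q])
    fix k v
    assume llr_less: "ereal (1 / real n) * llr (Pcond k v) (pmf (Q k) v) < ereal (- \<eta>)"
      and pos: "0 < (\<Sum>t\<in>{t\<in>T1 n L. \<kappa> t = k \<and> e t = v}. J t)"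
    define a where "a = Pm J n L (\<lambda>t. \<kappa> t = k \<and> e t = v)"
    define b where "b = Pm J n L (\<lambda>t. \<kappa> t = k)"
    have "a \<le> b"
      unfolding a_def b_def by (rule Pm_mono) (auto simp: J_nonneg)
    moreover have "a > 0"
      using pos by (simp add: a_def Pm_def)
    ultimately have "b > 0" "Pcond k v = a / b"
      by (simp_all add: a_def b_def Pcond_def)
    with \<open>a > 0\<close> llr_less_imp_le[OF n_pos _ pmf_nonneg llr_less]
    have "a / b \<le> exp (- real n * \<eta>) * pmf (Q k) v"
      by simp
    with \<open>b > 0\<close> show "(\<Sum>t\<in>{t\<in>T1 n L. \<kappa> t = k \<and> e t = v}. J t)
        \<le> exp (- real n * \<eta>) * (\<Sum>t\<in>{t\<in>T1 n L. \<kappa> t = k}. J t) * pmf (Q k) v"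
      unfolding a_def b_def Pm_def by (simp add: pos_divide_le_eq mult_ac)
  qed (auto intro: sum_nonneg J_nonneg)
  also have "(\<Sum>k\<in>\<kappa> ` T1 n L. Pm J n L (\<lambda>t. \<kappa> t = k)) = 1"
    using Pm_partition[of "\<kappa> ` T1 n L" \<kappa> n L J "\<lambda>_. True"] by (simp add: Pm_True)
  finally show ?thesis
    using E by (simp add: Pm_cong_support[of E] Let_def)
qed

lemma Pm_llr_PY_le:
  "Pm J n L (\<lambda>(x, y, s, z, xh). ereal (1 / real n) * llr (PY J n L y) (pmf QY y) < ereal (- \<eta>))
    \<le> exp (- real n * \<eta>)"
  by (rule Pm_llr_conditional_le[where \<kappa> = "\<lambda>_. ()" and e = "\<lambda>(x, y, s, z, xh). y" and Q = "\<lambda>_. QY"])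
    (simp add: PY_def Pm_True case_prod_unfold)

lemma Pm_llr_PZgY_le:
  "Pm J n L (\<lambda>(x, y, s, z, xh). ereal (1 / real n) * llr (PZgY J n L z y) (pmf (QZSY s y) z) < ereal (- \<eta>))
    \<le> exp (- real n * \<eta>)"
  by (rule Pm_llr_conditional_le[where \<kappa> = "\<lambda>(x, y, s, z, xh). y" and e = "\<lambda>(x, y, s, z, xh). z"
        and Q = "\<lambda>y. QZSY (f y) y"])
    (simp add: PZgY_def PYZ_def PY_def case_prod_unfold)

lemma Pm_llr_PXgYZ_le:
  "Pm J n L (\<lambda>(x, y, s, z, xh).
      ereal (1 / real n) * llr (PXgYZ J n L x y z) (pmf (QXSYZ s y z) x) < ereal (- \<eta>))
    \<le> exp (- real n * \<eta>)"
  by (rule Pm_llr_conditional_le[where \<kappa> = "\<lambda>(x, y, s, z, xh). (y, z)" and e = "\<lambda>(x, y, s, z, xh). x"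
        and Q = "\<lambda>(y, z). QXSYZ (f y) y z"])
    (simp add: PXgYZ_def PYZ_def case_prod_unfold conj_ac)

lemma Pm_llr_PXYgSZ_le:
  "Pm J n L (\<lambda>(x, y, s, z, xh). ereal (1 / real n) * llr (PXYgSZ J n L x y s z) (pmf (QXYSZX s z xh) (x, y))
      < ereal (- \<eta>))
    \<le> exp (- real n * \<eta>)"
  by (rule Pm_llr_conditional_le[where \<kappa> = "\<lambda>(x, y, s, z, xh). (s, z)" and e = "\<lambda>(x, y, s, z, xh). (x, y)"
        and Q = "\<lambda>(s, z). QXYSZX s z (h s z)"])
    (simp add: PXYgSZ_def PSZ_def case_prod_unfold conj_ac)

lemma Pm_llr_PYZ_le:
  assumes rate: "ln (real L) / real n \<le> Rc"
  shows "Pm J n L (\<lambda>(x, y, s, z, xh).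
      ereal Rc < ereal (1 / real n) * llr (pmf (QYZS s) (y, z)) (PYZ J n L y z) - ereal \<eta>)
    \<le> exp (- real n * \<eta>)"
proof -
  let ?\<kappa> = "\<lambda>(x::'x list, y::'y list, s::nat, z::'z list, xh::'xh list). s"
  let ?e = "\<lambda>(x::'x list, y::'y list, s::nat, z::'z list, xh::'xh list). (y, z)"
  let ?B = "\<lambda>s (y, z). ereal Rc < ereal (1 / real n) * llr (pmf (QYZS s) (y, z)) (PYZ J n L y z) - ereal \<eta>"
  have "Pm J n L (\<lambda>t. ?B (?\<kappa> t) (?e t)) \<le> exp (- real n * \<eta>) / real L * (\<Sum>s\<in>?\<kappa> ` T1 n L. 1)"
    unfolding Pm_def
  proof (rule sum_change_of_measure[where Q = QYZS])
    fix s and v :: "'y list \<times> 'z list"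
    obtain y z where v: "v = (y, z)"
      by (cases v)
    assume "?B s v" and pos: "0 < (\<Sum>t\<in>{t\<in>T1 n L. ?\<kappa> t = s \<and> ?e t = v}. J t)"
    have le: "(\<Sum>t\<in>{t\<in>T1 n L. ?\<kappa> t = s \<and> ?e t = v}. J t) \<le> PYZ J n L y z"
      unfolding PYZ_def Pm_def[symmetric] v by (rule Pm_mono) (auto simp: J_nonneg)
    with pos have "PYZ J n L y z > 0"
      by linarith
    moreover from \<open>?B s v\<close>
    have "ereal (1 / real n) * llr (pmf (QYZS s) (y, z)) (PYZ J n L y z) > ereal (Rc + \<eta>)"
      unfolding v by (cases "ereal (1 / real n) * llr (pmf (QYZS s) (y, z)) (PYZ J n L y z)") auto
    ultimately have Q_ge: "exp (real n * (Rc + \<eta>)) * PYZ J n L y z \<le> pmf (QYZS s) (y, z)"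
      by (intro llr_greater_imp_le[OF n_pos pmf_nonneg])
    have "real L * exp (real n * \<eta>) * PYZ J n L y z \<le> exp (real n * Rc) * exp (real n * \<eta>) * PYZ J n L y z"
      using le_exp_of_ln_div_le[OF n_pos _ rate] L_pos \<open>PYZ J n L y z > 0\<close> by (intro mult_right_mono) auto
    also have "\<dots> \<le> pmf (QYZS s) (y, z)"
      using Q_ge by (simp add: distrib_left exp_add)
    finally have "PYZ J n L y z \<le> exp (- real n * \<eta>) / real L * pmf (QYZS s) (y, z)"
      using L_pos by (simp add: exp_minus field_simps)
    with le show "(\<Sum>t\<in>{t\<in>T1 n L. ?\<kappa> t = s \<and> ?e t = v}. J t)
        \<le> exp (- real n * \<eta>) / real L * 1 * pmf (QYZS s) v"
      unfolding v by simp
  qed (auto simp: J_nonneg)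
  also have "(\<Sum>s\<in>?\<kappa> ` T1 n L. 1) \<le> real L"
    using card_mono[of "{1..L}" "?\<kappa> ` T1 n L"] by (force simp: T1_def)
  finally show ?thesis
    using L_pos by (simp add: case_prod_unfold field_simps)
qed

lemma PrWT_marginal:
  assumes "\<And>w xs ys ss z xh. (w, xs, ys, ss, z, xh) \<in> A \<longleftrightarrow> E w ss (xs w) (ys w) z xh"
  shows "PW A
    = (\<Sum>w\<in>{1..M}. \<Sum>ss\<in>PiE {1..M} (\<lambda>_. {1..L}).
         (\<Prod>m\<in>{1..M}-{w}. PS J n L (ss m)) * Pm J n L (\<lambda>(x, y, s, z, xh). s = ss w \<and> E w ss x y z xh))
      / real M"
proof -
  define G where
    "G w ss x y = (\<Sum>z\<in>seqs n. \<Sum>xh\<in>seqs n. if E w ss x y z xh then PZXhgXS x (ss w) z xh else 0)"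
    for w ss x y
  have "A = {(w, xs, ys, ss, z, xh). E w ss (xs w) (ys w) z xh}"
    using assms by auto
  then have "PW A
      = (\<Sum>w\<in>{1..M}. \<Sum>xs\<in>PiE {1..M} (\<lambda>_. seqs n). \<Sum>ys\<in>PiE {1..M} (\<lambda>_. seqs n).
           \<Sum>ss\<in>PiE {1..M} (\<lambda>_. {1..L}). (\<Prod>m\<in>{1..M}. PXYS (xs m) (ys m) (ss m)) * G w ss (xs w) (ys w))
        / real M"
  proof -
    have "(if P then a * b / real M else 0) = a * (if P then b else 0) / real M" for P a b
      by simp
    with \<open>A = _\<close> show ?thesis
      by (simp add: PrWT_expand PWT_eq G_def cong: if_cong flip: sum_distrib_left sum_divide_distrib)
  qed
  also have "\<dots> = (\<Sum>w\<in>{1..M}. \<Sum>ss\<in>PiE {1..M} (\<lambda>_. {1..L}). \<Sum>xs\<in>PiE {1..M} (\<lambda>_. seqs n).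
           \<Sum>ys\<in>PiE {1..M} (\<lambda>_. seqs n). (\<Prod>m\<in>{1..M}. PXYS (xs m) (ys m) (ss m)) * G w ss (xs w) (ys w))
        / real M"
    by (simp only: sum.swap[of _ "PiE {1..M} (\<lambda>_. {1..L})"])
  also have "\<dots> = (\<Sum>w\<in>{1..M}. \<Sum>ss\<in>PiE {1..M} (\<lambda>_. {1..L}).
           (\<Sum>x\<in>seqs n. \<Sum>y\<in>seqs n. PXYS x y (ss w) * G w ss x y)
             * (\<Prod>m\<in>{1..M}-{w}. \<Sum>x\<in>seqs n. \<Sum>y\<in>seqs n. PXYS x y (ss m)))
        / real M"
    by (intro arg_cong[where f = "\<lambda>a. a / real M"] sum.cong refl sum_PiE2_prod_times_coord) auto
  also have "\<dots> = (\<Sum>w\<in>{1..M}. \<Sum>ss\<in>PiE {1..M} (\<lambda>_. {1..L}).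
         (\<Prod>m\<in>{1..M}-{w}. PS J n L (ss m)) * Pm J n L (\<lambda>(x, y, s, z, xh). s = ss w \<and> E w ss x y z xh))
      / real M"
  proof (intro arg_cong[where f = "\<lambda>a. a / real M"] sum.cong refl)
    fix w ss assume "w \<in> {1..M}" and ss: "ss \<in> PiE {1..M} (\<lambda>_. {1..L})"
    then have "ss w \<in> {1..L}"
      by auto
    moreover have "(\<Prod>m\<in>{1..M}-{w}. \<Sum>x\<in>seqs n. \<Sum>y\<in>seqs n. PXYS x y (ss m))
        = (\<Prod>m\<in>{1..M}-{w}. PS J n L (ss m))"
      using ss by (intro prod.cong refl PS_eq[symmetric]) auto
    ultimately show "(\<Sum>x\<in>seqs n. \<Sum>y\<in>seqs n. PXYS x y (ss w) * G w ss x y)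
        * (\<Prod>m\<in>{1..M}-{w}. \<Sum>x\<in>seqs n. \<Sum>y\<in>seqs n. PXYS x y (ss m))
      = (\<Prod>m\<in>{1..M}-{w}. PS J n L (ss m)) * Pm J n L (\<lambda>(x, y, s, z, xh). s = ss w \<and> E w ss x y z xh)"
      using Pm_S_eq_sum[of "ss w" "E w ss"] by (simp add: G_def)
  qed
  finally show ?thesis .
qed

lemma PrWT_eq_Pm:
  assumes "\<And>w xs ys ss z xh. (w, xs, ys, ss, z, xh) \<in> A \<longleftrightarrow> E (xs w, ys w, ss w, z, xh)"
  shows "PW A = Pm J n L E"
proof -
  define G where "G s = Pm J n L (\<lambda>(x, y, s', z, xh). s' = s \<and> E (x, y, s', z, xh))" for s
  have "PW A = (\<Sum>w\<in>{1..M}. \<Sum>ss\<in>PiE {1..M} (\<lambda>_. {1..L}).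
      (\<Prod>m\<in>{1..M}-{w}. PS J n L (ss m)) * G (ss w)) / real M"
    unfolding G_def using PrWT_marginal[of A "\<lambda>w ss x y z xh. E (x, y, ss w, z, xh)"] assms
    by (simp add: conj_commute cong: conj_cong)
  also have "\<dots> = (\<Sum>w\<in>{1..M}. (\<Sum>s\<in>{1..L}. G s) * (\<Prod>m\<in>{1..M}-{w}. \<Sum>s\<in>{1..L}. PS J n L s)) / real M"
    by (intro arg_cong[where f = "\<lambda>a. a / real M"] sum.cong refl sum_PiE_prod_times_coord) auto
  also have "(\<Sum>s\<in>{1..L}. G s) = Pm J n L E"
    unfolding G_def using Pm_partition[of "{1..L}" "\<lambda>(x, y, s, z, xh). s" n L J E]
    by (force simp: T1_def case_prod_unfold conj_commute)
  finally show ?thesis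
    using M_pos sum_PS by simp
qed

lemma PrWT_not_A1: "PW {(w, t). t \<notin> A1 J n L QY \<eta> w} \<le> exp (- real n * \<eta>)"
  by (rule order.trans[OF eq_refl[OF PrWT_eq_Pm] Pm_llr_PY_le]) (simp add: A1_def not_le)

lemma PrWT_not_A2: "PW {(w, t). t \<notin> A2 J n L QZSY \<eta> w} \<le> exp (- real n * \<eta>)"
  by (rule order.trans[OF eq_refl[OF PrWT_eq_Pm] Pm_llr_PZgY_le]) (simp add: A2_def not_le)

lemma PrWT_not_A3: "PW {(w, t). t \<notin> A3 J n L QXSYZ \<eta> w} \<le> exp (- real n * \<eta>)"
  by (rule order.trans[OF eq_refl[OF PrWT_eq_Pm] Pm_llr_PXgYZ_le]) (simp add: A3_def not_le)

lemma PrWT_not_A4: "PW {(w, t). t \<notin> A4 J n L QXYSZX \<eta> w} \<le> exp (- real n * \<eta>)"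
  by (rule order.trans[OF eq_refl[OF PrWT_eq_Pm] Pm_llr_PXYgSZ_le]) (simp add: A4_def not_le)

lemma PrWT_not_A5:
  "ln (real L) / real n \<le> Rc \<Longrightarrow> PW {(w, t). t \<notin> A5 J n L QYZS Rc \<eta> w} \<le> exp (- real n * \<eta>)"
  by (rule order.trans[OF eq_refl[OF PrWT_eq_Pm] Pm_llr_PYZ_le]) (simp_all add: A5_def not_le)

lemma Pm_llr_PZgS_le:
  assumes rate: "Ri \<le> ln (real M) / real n" and s: "s \<in> {1..L}"
  shows "Pm J n L (\<lambda>(x, y, s', z, xh). s' = s \<and> D z \<and>
        ereal (1 / real n) * llr (PZgS J n L z s) (pmf QZ z) + ereal \<eta> < ereal Ri)
    \<le> real M * exp (- real n * \<eta>) * PS J n L s * (\<Sum>z\<in>seqs n. if D z then pmf QZ z else 0)"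
proof -
  define bad where "bad z \<longleftrightarrow> D z \<and> ereal (1 / real n) * llr (PZgS J n L z s) (pmf QZ z) + ereal \<eta> < ereal Ri"
    for z
  have "Pm J n L (\<lambda>(x, y, s', z, xh). s' = s \<and> bad z) = (\<Sum>z\<in>seqs n. if bad z then PSZ J n L s z else 0)"
    by (subst Pm_partition[where V = "seqs n" and e = "\<lambda>(x, y, s, z, xh). z"])
      (auto simp: T1_def PSZ_def Pm_def case_prod_unfold intro!: sum.cong sum.neutral)
  also have "\<dots> \<le> (\<Sum>z\<in>seqs n. if D z then real M * exp (- real n * \<eta>) * PS J n L s * pmf QZ z else 0)"
  proof (intro sum_mono)
    fix z
    have "PSZ J n L s z \<le> real M * exp (- real n * \<eta>) * PS J n L s * pmf QZ z"
      if "bad z" "PSZ J n L s z > 0"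
    proof -
      have "PSZ J n L s z \<le> PS J n L s"
        unfolding PSZ_def PS_def by (rule Pm_mono) (auto simp: J_nonneg)
      with that have "PS J n L s > 0" "PZgS J n L z s > 0"
        by (simp_all add: PZgS_def)
      moreover have "ereal (1 / real n) * llr (PZgS J n L z s) (pmf QZ z) < ereal (Ri - \<eta>)"
        using \<open>bad z\<close> unfolding bad_def
        by (cases "ereal (1 / real n) * llr (PZgS J n L z s) (pmf QZ z)") auto
      ultimately have "PZgS J n L z s \<le> exp (real n * (Ri - \<eta>)) * pmf QZ z"
        by (intro llr_less_imp_le[OF n_pos _ pmf_nonneg]) auto
      also have "\<dots> \<le> real M * exp (- real n * \<eta>) * pmf QZ z"
        using exp_le_of_le_ln_div[OF n_pos _ rate] M_pos
        by (simp add: right_diff_distrib exp_diff exp_minus divide_inverse mult_right_mono)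
      finally show ?thesis
        using \<open>PS J n L s > 0\<close> by (simp add: PZgS_def divide_le_eq mult_ac)
    qed
    moreover have "PSZ J n L s z \<ge> 0" "PS J n L s \<ge> 0"
      unfolding PSZ_def PS_def by (simp_all add: Pm_nonneg J_nonneg)
    ultimately show "(if bad z then PSZ J n L s z else 0)
        \<le> (if D z then real M * exp (- real n * \<eta>) * PS J n L s * pmf QZ z else 0)"
      by (cases "PSZ J n L s z > 0") (auto simp: bad_def)
  qed
  finally show ?thesis
    by (simp add: bad_def sum_distrib_left if_distrib[of "\<lambda>a. _ * a"] cong: if_cong)
qed

lemma PrWT_not_A6:
  fixes g :: "(nat \<Rightarrow> nat) \<Rightarrow> 'z list \<Rightarrow> nat"
  assumes rate: "Ri \<le> ln (real M) / real n"
  shows "PW {(w, xs, ys, ss, z, xh). g ss z = w \<and> (xs, ys, ss, z, xh) \<notin> A6 J n L QZ Ri \<eta> w}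
    \<le> exp (- real n * \<eta>)"
proof -
  let ?c = "exp (- real n * \<eta>)" and ?SS = "PiE {1..M} (\<lambda>_. {1..L})"
  define decoded where "decoded ss w = (\<Sum>z\<in>seqs n. if g ss z = w then pmf QZ z else 0)" for ss w
  have "PW {(w, xs, ys, ss, z, xh). g ss z = w \<and> (xs, ys, ss, z, xh) \<notin> A6 J n L QZ Ri \<eta> w}
      = (\<Sum>w\<in>{1..M}. \<Sum>ss\<in>?SS. (\<Prod>m\<in>{1..M}-{w}. PS J n L (ss m)) *
          Pm J n L (\<lambda>(x, y, s, z, xh). s = ss w \<and> g ss z = w \<and>
            ereal (1 / real n) * llr (PZgS J n L z (ss w)) (pmf QZ z) + ereal \<eta> < ereal Ri)) / real M"
    by (rule PrWT_marginal) (simp add: A6_def not_le)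
  also have "\<dots> \<le> (\<Sum>w\<in>{1..M}. \<Sum>ss\<in>?SS. (\<Prod>m\<in>{1..M}-{w}. PS J n L (ss m)) *
          (real M * ?c * PS J n L (ss w) * decoded ss w)) / real M"
    unfolding decoded_def
    by (intro divide_right_mono sum_mono mult_left_mono Pm_llr_PZgS_le[OF rate] prod_nonneg)
      (auto simp: PS_def Pm_nonneg J_nonneg)
  also have "\<dots> = (\<Sum>w\<in>{1..M}. \<Sum>ss\<in>?SS. ?c * ((\<Prod>m\<in>{1..M}. PS J n L (ss m)) * decoded ss w))"
  proof -
    have term_eq: "(\<Prod>m\<in>{1..M}-{w}. PS J n L (ss m))
          * (real M * ?c * PS J n L (ss w) * decoded ss w) / real M
        = ?c * ((\<Prod>m\<in>{1..M}. PS J n L (ss m)) * decoded ss w)" if "w \<in> {1..M}" for w ss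
    proof -
      have "(\<Prod>m\<in>{1..M}-{w}. PS J n L (ss m)) * PS J n L (ss w) = (\<Prod>m\<in>{1..M}. PS J n L (ss m))"
        using that by (metis finite_atLeastAtMost mult.commute prod.remove)
      with M_pos show ?thesis
        by (simp add: mult_ac)
    qed
    show ?thesis
      unfolding sum_divide_distrib by (intro sum.cong refl term_eq)
  qed
  also have "\<dots> = ?c * (\<Sum>ss\<in>?SS. (\<Prod>m\<in>{1..M}. PS J n L (ss m)) * (\<Sum>w\<in>{1..M}. decoded ss w))"
    by (subst sum.swap) (simp add: sum_distrib_left)
  also have "\<dots> \<le> ?c * (\<Sum>ss\<in>?SS. \<Prod>m\<in>{1..M}. PS J n L (ss m))"
  proof (intro mult_left_mono sum_mono mult_right_le_one_le prod_nonneg)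
    fix ss
    have "(\<Sum>w\<in>{1..M}. decoded ss w) = (\<Sum>z\<in>seqs n. \<Sum>w\<in>{1..M}. if g ss z = w then pmf QZ z else 0)"
      unfolding decoded_def by (rule sum.swap)
    also have "\<dots> \<le> (\<Sum>z\<in>seqs n. pmf QZ z)"
      by (intro sum_mono) auto
    also have "\<dots> \<le> 1"
      by (simp add: sum_pmf_le_1)
    finally show "(\<Sum>w\<in>{1..M}. decoded ss w) \<le> 1" .
  qed (auto simp: decoded_def PS_def Pm_nonneg J_nonneg intro!: sum_nonneg)
  also have "(\<Sum>ss\<in>?SS. \<Prod>m\<in>{1..M}. PS J n L (ss m)) = 1"
    using prod_sum_PiE[of "{1..M}" "\<lambda>_. {1..L}" "\<lambda>_. PS J n L"] sum_PS by simp
  finally show ?thesis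
    by simp
qed

lemma Pc_eq_PrWT:
  "Pc n M PX PYX PZX f g h d D = PW {(w, xs, ys, ss, z, xh). g ss z = w \<and> dist_n d (xs w) xh \<le> D}"
  unfolding Pc_def PrWT_expand
proof (intro sum.cong refl, goal_cases)
  case (1 w xs ys)
  then have w: "w \<in> {1..M}" and ys: "ys \<in> PiE {1..M} (\<lambda>_. seqs n)"
    by simp_all
  define s0 where "s0 = restrict (\<lambda>m. f (ys m)) {1..M}"
  define A where "A = (\<Prod>m\<in>{1..M}. pn PX (xs m) * chn PYX (xs m) (ys m))"
  define good where "good ss z xh \<longleftrightarrow> g ss z = w \<and> dist_n d (xs w) xh \<le> D" for ss z xh
  have s0: "s0 \<in> PiE {1..M} (\<lambda>_. {1..L})"
    unfolding s0_def restrict_PiE_iff using ys by (blast intro: f_in_range PiE_mem)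
  have "(\<Sum>ss\<in>PiE {1..M} (\<lambda>_. {1..L}). \<Sum>z\<in>seqs n. \<Sum>xh\<in>seqs n.
          if (w, xs, ys, ss, z, xh) \<in> {(w, xs, ys, ss, z, xh). g ss z = w \<and> dist_n d (xs w) xh \<le> D}
          then PWT M PX PYX PZX f h (w, xs, ys, ss, z, xh) else 0)
      = (\<Sum>ss\<in>PiE {1..M} (\<lambda>_. {1..L}). if ss = s0 then \<Sum>z\<in>seqs n. \<Sum>xh\<in>seqs n.
          if good ss z xh then A * PZXhgXS (xs w) (ss w) z xh / real M else 0 else 0)"
  proof (intro sum.cong refl)
    fix ss :: "nat \<Rightarrow> nat"
    assume "ss \<in> PiE {1..M} (\<lambda>_. {1..L})"
    then have "(\<Prod>m\<in>{1..M}. PXYS (xs m) (ys m) (ss m)) = (if ss = s0 then A else 0)"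
      unfolding PXYS_def s0_def A_def by (intro prod_times_indicator_PiE) auto
    then show "(\<Sum>z\<in>seqs n. \<Sum>xh\<in>seqs n.
          if (w, xs, ys, ss, z, xh) \<in> {(w, xs, ys, ss, z, xh). g ss z = w \<and> dist_n d (xs w) xh \<le> D}
          then PWT M PX PYX PZX f h (w, xs, ys, ss, z, xh) else 0)
      = (if ss = s0 then \<Sum>z\<in>seqs n. \<Sum>xh\<in>seqs n.
          if good ss z xh then A * PZXhgXS (xs w) (ss w) z xh / real M else 0 else 0)"
      by (simp add: PWT_eq good_def cong: if_cong)
  qed
  also have "\<dots> = (\<Sum>z\<in>seqs n. \<Sum>xh\<in>seqs n.
      if good s0 z xh then A * PZXhgXS (xs w) (s0 w) z xh / real M else 0)"
    using s0 by (simp only: sum.delta finite_PiE finite_atLeastAtMost finite_seqs if_True)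
  also have "\<dots> = (\<Sum>z\<in>seqs n. let ss = s0 in
      1 / real M * A * chn PZX (xs w) z * (if g ss z = w \<and> dist_n d (xs w) (h (ss w) z) \<le> D then 1 else 0))"
  proof (intro sum.cong refl)
    fix z :: "'z list" assume "z \<in> seqs n"
    with s0 w have "h (s0 w) z \<in> seqs n"
      by (blast intro: h_in_seqs PiE_mem)
    moreover have "(if good s0 z xh then A * PZXhgXS (xs w) (s0 w) z xh / real M else 0)
        = (if xh = h (s0 w) z
           then if good s0 z (h (s0 w) z) then A * chn PZX (xs w) z / real M else 0 else 0)" for xh
      by (simp add: PZXhgXS_def)
    ultimately show "(\<Sum>xh\<in>seqs n. if good s0 z xh then A * PZXhgXS (xs w) (s0 w) z xh / real M else 0)
        = (let ss = s0 in 1 / real M * A * chn PZX (xs w) z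
             * (if g ss z = w \<and> dist_n d (xs w) (h (ss w) z) \<le> D then 1 else 0))"
      by (simp add: good_def)
  qed
  finally show ?case
    unfolding s0_def A_def by (rule sym)
qed

end

theorem lemma9:
  fixes n M L :: nat
    and PX :: "'x::finite pmf" and PYX :: "'x \<Rightarrow> 'y::finite pmf" and PZX :: "'x \<Rightarrow> 'z::finite pmf"
    and d :: "'x \<Rightarrow> 'xh::finite \<Rightarrow> real" and D Rc Ri \<eta> :: real
    and f :: "'y list \<Rightarrow> nat" and g :: "(nat \<Rightarrow> nat) \<Rightarrow> 'z list \<Rightarrow> nat"
    and h :: "nat \<Rightarrow> 'z list \<Rightarrow> 'xh list"
    and QY :: "'y list pmf" and QZSY :: "nat \<Rightarrow> 'y list \<Rightarrow> 'z list pmf"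
    and QXSYZ :: "nat \<Rightarrow> 'y list \<Rightarrow> 'z list \<Rightarrow> 'x list pmf"
    and QXYSZX :: "nat \<Rightarrow> 'z list \<Rightarrow> 'xh list \<Rightarrow> ('x list \<times> 'y list) pmf"
    and QYZS :: "nat \<Rightarrow> ('y list \<times> 'z list) pmf" and QZ :: "'z list pmf"
  assumes n_pos: "n > 0" and M_pos: "M \<ge> 1" and L_pos: "L \<ge> 1"
    and f_range: "\<And>ys. length ys = n \<Longrightarrow> f ys \<in> {1..L}"
    and h_len: "\<And>s z. s \<in> {1..L} \<Longrightarrow> length z = n \<Longrightarrow> length (h s z) = n"
    and rate_c: "ln (real L) / real n \<le> Rc"
    and rate_i: "ln (real M) / real n \<ge> Ri"
    and eta_pos: "\<eta> > 0"
    and QY_supp: "set_pmf QY \<subseteq> seqs n"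
    and QZSY_supp: "\<And>s y. set_pmf (QZSY s y) \<subseteq> seqs n"
    and QXSYZ_supp: "\<And>s y z. set_pmf (QXSYZ s y z) \<subseteq> seqs n"
    and QXYSZX_supp: "\<And>s z xh. set_pmf (QXYSZX s z xh) \<subseteq> seqs n \<times> seqs n"
    and QYZS_supp: "\<And>s. set_pmf (QYZS s) \<subseteq> seqs n \<times> seqs n"
    and QZ_supp: "set_pmf QZ \<subseteq> seqs n"
  shows "Pc n M PX PYX PZX f g h d D
    \<le> PrWT n M L PX PYX PZX f h
        {(w, t). t \<in> A1 (joint1 PX PYX PZX f h) n L QY \<eta> w
                   \<inter> A2 (joint1 PX PYX PZX f h) n L QZSY \<eta> w
                   \<inter> A3 (joint1 PX PYX PZX f h) n L QXSYZ \<eta> w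
                   \<inter> A4 (joint1 PX PYX PZX f h) n L QXYSZX \<eta> w
                   \<inter> A5 (joint1 PX PYX PZX f h) n L QYZS Rc \<eta> w
                   \<inter> A6 (joint1 PX PYX PZX f h) n L QZ Ri \<eta> w
                   \<inter> A7 d D w}
      + 6 * exp (- real n * \<eta>)"
proof -
  interpret identification_code n M L PX PYX PZX f h
    using n_pos M_pos L_pos f_range h_len by unfold_locales
  let ?J = "joint1 PX PYX PZX f h" and ?P = "PrWT n M L PX PYX PZX f h" and ?c = "exp (- real n * \<eta>)"
  let ?S = "{(w, t). t \<in> A1 ?J n L QY \<eta> w \<inter> A2 ?J n L QZSY \<eta> w \<inter> A3 ?J n L QXSYZ \<eta> w
      \<inter> A4 ?J n L QXYSZX \<eta> w \<inter> A5 ?J n L QYZS Rc \<eta> w \<inter> A6 ?J n L QZ Ri \<eta> w \<inter> A7 d D w}"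
  have "Pc n M PX PYX PZX f g h d D = ?P {(w, xs, ys, ss, z, xh). g ss z = w \<and> dist_n d (xs w) xh \<le> D}"
    by (rule Pc_eq_PrWT)
  also have "\<dots> \<le> ?P (?S \<union> {(w, t). t \<notin> A1 ?J n L QY \<eta> w} \<union> {(w, t). t \<notin> A2 ?J n L QZSY \<eta> w}
      \<union> {(w, t). t \<notin> A3 ?J n L QXSYZ \<eta> w} \<union> {(w, t). t \<notin> A4 ?J n L QXYSZX \<eta> w}
      \<union> {(w, t). t \<notin> A5 ?J n L QYZS Rc \<eta> w}
      \<union> {(w, xs, ys, ss, z, xh). g ss z = w \<and> (xs, ys, ss, z, xh) \<notin> A6 ?J n L QZ Ri \<eta> w})"
    by (rule PrWT_mono) (auto simp: A7_def)
  also have "\<dots> \<le> ?P ?S + ?c + ?c + ?c + ?c + ?c + ?c"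
    by (intro PrWT_Un_le_add order_refl PrWT_not_A1 PrWT_not_A2 PrWT_not_A3 PrWT_not_A4
        PrWT_not_A5[OF rate_c] PrWT_not_A6[OF rate_i])
  finally show ?thesis
    by simp
qed

end
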